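(* Let $M$ be a real symmetric matrix whose induced signed graph $\Gamma=(G,\sigma)$, $G=(V,E)$, is connected, and let $f$ be an eigenfunction of $M$ for an eigenvalue $\lambda$. Let $D_1,\dots,D_m$ be the weak nodal domains of $f$, and for each $i$ let $g_i(x)=f(x)$ if $x\in D_i$ and $g_i(x)=0$ otherwise. If $g=\sum_{i=1}^m a_ig_i$ with $a_1,\dots,a_m\in\mathbb R$ is an eigenfunction of $M$ for $\lambda$, then $a_1=a_2=\cdots=a_m$.
   Context: The induced signed graph of a real symmetric $n\times n$ matrix $M$ has vertices $x_1,\dots,x_n$, edge $\{x_i,x_j\}$ iff $i\ne j$ and $M_{ij}\ne0$, sign $\sigma_{x_ix_j}=-M_{ij}/|M_{ij}|$. Eigenfunctions are nonzero eigenvectors viewed as functions on $V$. A walk is $y_1,\dots,y_m$ ($m\ge2$) with consecutive vertices adjacent. A W-walk of $f$ is a walk such that for any two consecutive nonzeros $y_i,y_j$ along it ($i<j$, $f(y_i)\ne0\ne f(y_j)$, $f(y_l)=0$ for $i<l<j$) one has $f(y_i)\sigma_{y_iy_{i+1}}\cdots\sigma_{y_{j-1}y_j}f(y_j)>0$. On $\Omega=\{x:f(x)\ne0\}$ the relation "$x=y$ or a W-walk connects $x$ and $y$" is an equivalence relation with classes $W_1,\dots,W_q$; the weak nodal domains of $f$ are the induced subgraphs on $W_i^0=W_i\cup\{x\in V:\text{there is a W-walk from } x \text{ to some vertex of } W_i\}$ (membership $x\in D_i$ refers to the vertex set). *)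

theory Defs
  imports "HOL-Analysis.Analysis"
begin

definition adj :: "real^'n^'n \<Rightarrow> 'n \<Rightarrow> 'n \<Rightarrow> bool" where
  "adj M x y \<longleftrightarrow> x \<noteq> y \<and> M $ x $ y \<noteq> 0"

definition sgn_edge :: "real^'n^'n \<Rightarrow> 'n \<Rightarrow> 'n \<Rightarrow> real" where
  "sgn_edge M x y = - (M $ x $ y / \<bar>M $ x $ y\<bar>)"

definition is_walk :: "real^'n^'n \<Rightarrow> 'n list \<Rightarrow> bool" where
  "is_walk M ys \<longleftrightarrow> length ys \<ge> 2 \<and> (\<forall>i. Suc i < length ys \<longrightarrow> adj M (ys ! i) (ys ! Suc i))"

definition connected_sg :: "real^'n^'n \<Rightarrow> bool" where
  "connected_sg M \<longleftrightarrow> (\<forall>x y. x \<noteq> y \<longrightarrow> (\<exists>ys. is_walk M ys \<and> hd ys = x \<and> last ys = y))"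

definition is_eigenfunction :: "real^'n^'n \<Rightarrow> real \<Rightarrow> real^'n \<Rightarrow> bool" where
  "is_eigenfunction M lam f \<longleftrightarrow> f \<noteq> 0 \<and> M *v f = lam *\<^sub>R f"

definition is_W_walk :: "real^'n^'n \<Rightarrow> real^'n \<Rightarrow> 'n list \<Rightarrow> bool" where
  "is_W_walk M f ys \<longleftrightarrow> is_walk M ys \<and>
     (\<forall>i j. i < j \<and> j < length ys \<and> f $ (ys ! i) \<noteq> 0 \<and> f $ (ys ! j) \<noteq> 0 \<and>
        (\<forall>l. i < l \<and> l < j \<longrightarrow> f $ (ys ! l) = 0) \<longrightarrow>
        f $ (ys ! i) * (\<Prod>l\<in>{i..<j}. sgn_edge M (ys ! l) (ys ! Suc l)) * f $ (ys ! j) > 0)"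

definition W_connects :: "real^'n^'n \<Rightarrow> real^'n \<Rightarrow> 'n \<Rightarrow> 'n \<Rightarrow> bool" where
  "W_connects M f x y \<longleftrightarrow> (\<exists>ys. is_W_walk M f ys \<and> hd ys = x \<and> last ys = y)"

definition nonzero_set :: "real^'n \<Rightarrow> 'n set" where
  "nonzero_set f = {x. f $ x \<noteq> 0}"

definition W_rel :: "real^'n^'n \<Rightarrow> real^'n \<Rightarrow> 'n \<Rightarrow> 'n \<Rightarrow> bool" where
  "W_rel M f x y \<longleftrightarrow> x \<in> nonzero_set f \<and> y \<in> nonzero_set f \<and> (x = y \<or> W_connects M f x y)"

definition W_classes :: "real^'n^'n \<Rightarrow> real^'n \<Rightarrow> 'n set set" where
  "W_classes M f = (\<lambda>x. {y. W_rel M f x y}) ` nonzero_set f"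

definition W_closure :: "real^'n^'n \<Rightarrow> real^'n \<Rightarrow> 'n set \<Rightarrow> 'n set" where
  "W_closure M f W = W \<union> {x. \<exists>y\<in>W. W_connects M f x y}"

definition weak_nodal_domains :: "real^'n^'n \<Rightarrow> real^'n \<Rightarrow> 'n set set" where
  "weak_nodal_domains M f = W_closure M f ` W_classes M f"

definition restrict_fun :: "real^'n \<Rightarrow> 'n set \<Rightarrow> real^'n" where
  "restrict_fun f D = (\<chi> x. if x \<in> D then f $ x else 0)"

end

theory Submission
  imports Defs
begin

(* Write g = \<phi> f, where \<phi> x is the coefficient a D of the weak nodal domain D containing x;
   \<phi> is constant along W-walks. From M f = \<lambda> f, M g = \<lambda> g and the symmetry of M one gets
   \<Sum>x y. M x y f x f y (\<phi> y - \<phi> x)^2 = 0, and every term is nonnegative because an edge with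
   M x y f x f y < 0 is itself a W-walk; so \<phi> agrees on adjacent nonzero vertices.
   At a zero z of f the rows of both eigen-equations give \<Sum>y. M z y f y = 0 = \<Sum>y. M z y f y \<phi> y.
   Nonzero neighbours of z on the same side (same sign of M z y f y) are W-connected through z,
   and the two equations then force the two sides to agree. Finally, a walk between nonzero
   vertices whose interior vertices are zeros of f can be rerouted at its last zero vertex into
   a W-walk, and connectivity of the graph gives a single value of \<phi>. *)

section \<open>Walks\<close>

lemma symmetric_entry: "transpose M = M \<Longrightarrow> M $ x $ y = M $ y $ x"
  by (metis transpose_def vec_lambda_beta)

lemma adj_sym: "transpose M = M \<Longrightarrow> adj M x y \<Longrightarrow> adj M y x"
  unfolding adj_def by (metis symmetric_entry)

lemma sgn_edge_sym: "transpose M = M \<Longrightarrow> sgn_edge M x y = sgn_edge M y x"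
  unfolding sgn_edge_def by (metis symmetric_entry)

lemma sgn_edge_nonzero: "adj M x y \<Longrightarrow> sgn_edge M x y \<noteq> 0"
  by (simp add: adj_def sgn_edge_def)

lemma is_walk_length: "is_walk M ys \<Longrightarrow> 2 \<le> length ys"
  by (simp add: is_walk_def)

lemma is_walk_pair: "is_walk M [x, y] \<longleftrightarrow> adj M x y"
  by (auto simp: is_walk_def less_Suc_eq)

lemma is_walk_rev:
  assumes sym: "transpose M = M" and walk: "is_walk M ys"
  shows "is_walk M (rev ys)"
  unfolding is_walk_def
proof (intro conjI allI impI)
  show "2 \<le> length (rev ys)" using walk by (simp add: is_walk_def)
  fix i assume i: "Suc i < length (rev ys)"
  define m where "m = length ys - Suc (Suc i)"
  have "adj M (ys ! m) (ys ! Suc m)" using walk i unfolding is_walk_def m_def by auto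
  moreover have "rev ys ! i = ys ! Suc m" "rev ys ! Suc i = ys ! m"
    using i by (simp_all add: rev_nth m_def Suc_diff_Suc)
  ultimately show "adj M (rev ys ! i) (rev ys ! Suc i)" using adj_sym[OF sym] by metis
qed

lemma is_walk_take: "is_walk M ys \<Longrightarrow> 2 \<le> k \<Longrightarrow> is_walk M (take k ys)"
  by (auto simp: is_walk_def)

lemma is_walk_drop:
  assumes "is_walk M ys" "k + 2 \<le> length ys"
  shows "is_walk M (drop k ys)"
  unfolding is_walk_def
proof (intro conjI allI impI)
  fix i assume "Suc i < length (drop k ys)"
  then have "adj M (ys ! (k + i)) (ys ! Suc (k + i))"
    using assms(1) unfolding is_walk_def by simp
  then show "adj M (drop k ys ! i) (drop k ys ! Suc i)" using \<open>Suc i < length (drop k ys)\<close> by simp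
qed (use assms in simp)

lemma append_tl_eq_butlast_append:
  "ys \<noteq> [] \<Longrightarrow> zs \<noteq> [] \<Longrightarrow> last ys = hd zs \<Longrightarrow> ys @ tl zs = butlast ys @ zs"
  by (metis append_butlast_last_id append_Cons append_assoc append_Nil hd_Cons_tl)

lemma nth_append_tl_shift:
  assumes "ys \<noteq> []" "last ys = hd zs" "k < length zs"
  shows "(ys @ tl zs) ! (length ys - 1 + k) = zs ! k"
proof -
  have "zs \<noteq> []" using assms(3) by auto
  then show ?thesis using assms by (simp add: append_tl_eq_butlast_append nth_append)
qed

lemma is_walk_join:
  assumes ys: "is_walk M ys" and zs: "is_walk M zs" and eq: "last ys = hd zs"
  shows "is_walk M (ys @ tl zs)"
  unfolding is_walk_def
proof (intro conjI allI impI)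
  define c where "c = length ys - 1"
  have len: "2 \<le> length ys" "2 \<le> length zs" using ys zs by (simp_all add: is_walk_length)
  then show "2 \<le> length (ys @ tl zs)" by simp
  fix i assume i: "Suc i < length (ys @ tl zs)"
  show "adj M ((ys @ tl zs) ! i) ((ys @ tl zs) ! Suc i)"
  proof (cases "Suc i < length ys")
    case True
    then show ?thesis using ys unfolding is_walk_def by (simp add: nth_append)
  next
    case False
    define k where "k = i - c"
    have k: "i = c + k" "Suc k < length zs" using False i len unfolding c_def k_def by auto
    have "adj M (zs ! k) (zs ! Suc k)" using zs k(2) unfolding is_walk_def by simp
    moreover have "ys \<noteq> []" using len by auto
    ultimately show ?thesis
      using nth_append_tl_shift[OF _ eq, of k] nth_append_tl_shift[OF _ eq, of "Suc k"] k
      unfolding c_def by simp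
  qed
qed

section \<open>W-walks\<close>

lemma is_W_walk_walk: "is_W_walk M f ys \<Longrightarrow> is_walk M ys"
  by (simp add: is_W_walk_def)

lemma is_W_walkI:
  assumes "is_walk M ys"
    and "\<And>i j. i < j \<Longrightarrow> j < length ys \<Longrightarrow> f $ (ys ! i) \<noteq> 0 \<Longrightarrow> f $ (ys ! j) \<noteq> 0 \<Longrightarrow>
      (\<And>l. i < l \<Longrightarrow> l < j \<Longrightarrow> f $ (ys ! l) = 0) \<Longrightarrow>
      f $ (ys ! i) * (\<Prod>l\<in>{i..<j}. sgn_edge M (ys ! l) (ys ! Suc l)) * f $ (ys ! j) > 0"
  shows "is_W_walk M f ys"
  using assms unfolding is_W_walk_def by blast

lemma is_W_walkD:
  assumes "is_W_walk M f ys" "i < j" "j < length ys" "f $ (ys ! i) \<noteq> 0" "f $ (ys ! j) \<noteq> 0"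
    "\<And>l. i < l \<Longrightarrow> l < j \<Longrightarrow> f $ (ys ! l) = 0"
  shows "f $ (ys ! i) * (\<Prod>l\<in>{i..<j}. sgn_edge M (ys ! l) (ys ! Suc l)) * f $ (ys ! j) > 0"
  using assms unfolding is_W_walk_def by blast

lemma is_W_walk_join:
  assumes ys: "is_W_walk M f ys" and zs: "is_W_walk M f zs"
    and eq: "last ys = hd zs" and nz: "f $ hd zs \<noteq> 0"
  shows "is_W_walk M f (ys @ tl zs)"
proof -
  define c where "c = length ys - 1"
  let ?ws = "ys @ tl zs"
  have len: "2 \<le> length ys" "2 \<le> length zs"
    using ys zs by (meson is_W_walk_walk is_walk_length)+
  then have ne: "ys \<noteq> []" "zs \<noteq> []" by auto
  have lo: "?ws ! k = ys ! k" if "k \<le> c" for k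
  proof -
    have "k < length ys" using that len by (simp add: c_def)
    then show ?thesis by (simp add: nth_append)
  qed
  have hi: "?ws ! (c + k) = zs ! k" if "k < length zs" for k
    using nth_append_tl_shift[OF _ eq that] len unfolding c_def by fastforce
  have junction: "?ws ! c = hd zs" using hi[of 0] ne by (simp add: hd_conv_nth)
  show ?thesis
  proof (rule is_W_walkI)
    show "is_walk M ?ws" using ys zs eq by (simp add: is_W_walk_walk is_walk_join)
    fix i j assume ij: "i < j" and j: "j < length ?ws"
      and fi: "f $ (?ws ! i) \<noteq> 0" and fj: "f $ (?ws ! j) \<noteq> 0"
      and between: "\<And>l. i < l \<Longrightarrow> l < j \<Longrightarrow> f $ (?ws ! l) = 0"
    have "\<not> (i < c \<and> c < j)" using between[of c] junction nz by auto
    then have "j \<le> c \<or> c \<le> i" by linarith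
    then show "f $ (?ws ! i) * (\<Prod>l\<in>{i..<j}. sgn_edge M (?ws ! l) (?ws ! Suc l)) * f $ (?ws ! j) > 0"
    proof (elim disjE)
      assume "j \<le> c"
      then have "(\<Prod>l\<in>{i..<j}. sgn_edge M (?ws ! l) (?ws ! Suc l))
          = (\<Prod>l\<in>{i..<j}. sgn_edge M (ys ! l) (ys ! Suc l))"
        by (intro prod.cong) (simp_all add: lo)
      moreover have "f $ (ys ! l) = 0" if "i < l" "l < j" for l
        using between[OF that] lo[of l] that \<open>j \<le> c\<close> by simp
      then have "f $ (ys ! i) * (\<Prod>l\<in>{i..<j}. sgn_edge M (ys ! l) (ys ! Suc l)) * f $ (ys ! j) > 0"
        using is_W_walkD[OF ys ij] fi fj \<open>j \<le> c\<close> lo[of i] lo[of j] ij len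
        by (simp add: c_def)
      ultimately show ?thesis using lo[of i] lo[of j] ij \<open>j \<le> c\<close> by simp
    next
      assume "c \<le> i"
      then obtain i' j' where ij': "i = c + i'" "j = c + j'"
        using ij by (metis le_add_diff_inverse less_imp_le_nat order.trans)
      then have "j' < length zs" using j len by (simp add: c_def)
      have "(\<Prod>l\<in>{i..<j}. sgn_edge M (?ws ! l) (?ws ! Suc l))
          = (\<Prod>l\<in>{i'..<j'}. sgn_edge M (?ws ! (c + l)) (?ws ! (c + Suc l)))"
        using prod.shift_bounds_nat_ivl[of "\<lambda>l. sgn_edge M (?ws ! l) (?ws ! Suc l)" i' c j']
        unfolding ij' by (simp add: ac_simps)
      also have "\<dots> = (\<Prod>l\<in>{i'..<j'}. sgn_edge M (zs ! l) (zs ! Suc l))"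
        using \<open>j' < length zs\<close> hi[of "Suc _"] by (intro prod.cong) (simp_all add: hi)
      moreover have "f $ (zs ! l) = 0" if "i' < l" "l < j'" for l
        using between[of "c + l"] hi[of l] that ij' \<open>j' < length zs\<close> by simp
      then have "f $ (zs ! i') * (\<Prod>l\<in>{i'..<j'}. sgn_edge M (zs ! l) (zs ! Suc l)) * f $ (zs ! j') > 0"
        using is_W_walkD[OF zs, of i' j'] fi fj ij ij' hi \<open>j' < length zs\<close> by simp
      ultimately show ?thesis using hi ij ij' \<open>j' < length zs\<close> by simp
    qed
  qed
qed

lemma is_W_walk_rev:
  assumes sym: "transpose M = M" and W: "is_W_walk M f ys"
  shows "is_W_walk M f (rev ys)"
proof (rule is_W_walkI)
  show "is_walk M (rev ys)" using is_walk_rev[OF sym] W by (simp add: is_W_walk_walk)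
  define n where "n = length ys"
  have nth: "rev ys ! k = ys ! (n - Suc k)" if "k < n" for k
    using that by (simp add: rev_nth n_def)
  fix i j assume ij: "i < j" and j: "j < length (rev ys)"
    and fi: "f $ (rev ys ! i) \<noteq> 0" and fj: "f $ (rev ys ! j) \<noteq> 0"
    and between: "\<And>l. i < l \<Longrightarrow> l < j \<Longrightarrow> f $ (rev ys ! l) = 0"
  define i' j' where "i' = n - Suc j" and "j' = n - Suc i"
  have ij': "i' < j'" "j' < n" using ij j by (auto simp: i'_def j'_def n_def)
  have "f $ (ys ! l) = 0" if "i' < l" "l < j'" for l
    using between[of "n - Suc l"] nth[of "n - Suc l"] that ij'
    by (simp add: i'_def j'_def Suc_diff_Suc)
  then have pos: "f $ (ys ! i') * (\<Prod>l\<in>{i'..<j'}. sgn_edge M (ys ! l) (ys ! Suc l)) * f $ (ys ! j') > 0"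
    using is_W_walkD[OF W ij'(1)] ij' fi fj nth ij j by (simp add: i'_def j'_def n_def)
  have "(\<Prod>l\<in>{i..<j}. sgn_edge M (rev ys ! l) (rev ys ! Suc l))
      = (\<Prod>l\<in>{i'..<j'}. sgn_edge M (ys ! l) (ys ! Suc l))"
  proof (rule prod.reindex_bij_witness[of _ "\<lambda>l. n - Suc (Suc l)" "\<lambda>l. n - Suc (Suc l)"])
    fix l assume l: "l \<in> {i..<j}"
    then show "n - Suc (Suc (n - Suc (Suc l))) = l" "n - Suc (Suc l) \<in> {i'..<j'}"
      using j by (auto simp: i'_def j'_def n_def)
    show "sgn_edge M (ys ! (n - Suc (Suc l))) (ys ! Suc (n - Suc (Suc l)))
        = sgn_edge M (rev ys ! l) (rev ys ! Suc l)"
      using l j nth[of l] nth[of "Suc l"] sgn_edge_sym[OF sym] by (simp add: n_def Suc_diff_Suc)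
  next
    fix l assume "l \<in> {i'..<j'}"
    then show "n - Suc (Suc (n - Suc (Suc l))) = l" "n - Suc (Suc l) \<in> {i..<j}"
      using ij' by (auto simp: i'_def j'_def)
  qed
  with pos show "f $ (rev ys ! i) * (\<Prod>l\<in>{i..<j}. sgn_edge M (rev ys ! l) (rev ys ! Suc l))
      * f $ (rev ys ! j) > 0"
    using nth[of i] nth[of j] ij j by (simp add: i'_def j'_def n_def mult.commute mult.left_commute)
qed

lemma W_connects_sym:
  assumes sym: "transpose M = M" and "W_connects M f x y"
  shows "W_connects M f y x"
proof -
  obtain ys where ys: "is_W_walk M f ys" "hd ys = x" "last ys = y"
    using assms(2) unfolding W_connects_def by blast
  then have "ys \<noteq> []" using is_W_walk_walk is_walk_length by fastforce
  then show ?thesis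
    using ys is_W_walk_rev[OF sym ys(1)] unfolding W_connects_def by (metis hd_rev last_rev)
qed

lemma W_connects_trans:
  assumes "W_connects M f x y" "W_connects M f y z" "f $ y \<noteq> 0"
  shows "W_connects M f x z"
proof -
  obtain ys zs where ys: "is_W_walk M f ys" "hd ys = x" "last ys = y"
    and zs: "is_W_walk M f zs" "hd zs = y" "last zs = z"
    using assms unfolding W_connects_def by blast
  have "2 \<le> length ys" "2 \<le> length zs" using ys zs by (meson is_W_walk_walk is_walk_length)+
  moreover have "tl zs \<noteq> []" using \<open>2 \<le> length zs\<close> by (cases zs) auto
  ultimately have "hd (ys @ tl zs) = x" "last (ys @ tl zs) = z"
    using ys zs by (auto simp: last_tl hd_append)
  moreover have "is_W_walk M f (ys @ tl zs)" using is_W_walk_join[OF ys(1) zs(1)] ys(3) zs(2) assms(3) by simp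
  ultimately show ?thesis unfolding W_connects_def by blast
qed

definition walk_sign :: "real^'n^'n \<Rightarrow> 'n list \<Rightarrow> real" where
  "walk_sign M ys = (\<Prod>l\<in>{0..<length ys - 1}. sgn_edge M (ys ! l) (ys ! Suc l))"

lemma walk_sign_snoc:
  assumes "xs \<noteq> []"
  shows "walk_sign M (xs @ [v]) = walk_sign M xs * sgn_edge M (last xs) v"
proof -
  obtain m where m: "length xs = Suc m" using assms by (cases xs) auto
  have "walk_sign M (xs @ [v]) = (\<Prod>l\<in>{0..<m}. sgn_edge M (xs ! l) (xs ! Suc l))
      * sgn_edge M ((xs @ [v]) ! m) ((xs @ [v]) ! Suc m)"
    unfolding walk_sign_def using m by (simp add: nth_append)
  also have "(xs @ [v]) ! m = last xs" using m assms by (simp add: nth_append last_conv_nth)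
  finally show ?thesis using m by (simp add: walk_sign_def nth_append)
qed

lemma walk_sign_nonzero: "is_walk M ys \<Longrightarrow> walk_sign M ys \<noteq> 0"
  unfolding walk_sign_def is_walk_def by (auto simp: sgn_edge_nonzero)

lemma W_connects_zero_interior_walk:
  assumes walk: "is_walk M (u # zs @ [v])" and zeros: "\<forall>w\<in>set zs. f $ w = 0"
    and pos: "f $ u * walk_sign M (u # zs @ [v]) * f $ v > 0"
  shows "W_connects M f u v"
proof -
  let ?ys = "u # zs @ [v]"
  have "is_W_walk M f ?ys"
  proof (rule is_W_walkI[OF walk])
    define n where "n = length ?ys"
    have interior: "f $ (?ys ! k) = 0" if "0 < k" "k < n - 1" for k
      using that zeros by (cases k) (auto simp: nth_append n_def)
    fix i j assume "i < j" "j < length ?ys" "f $ (?ys ! i) \<noteq> 0" "f $ (?ys ! j) \<noteq> 0"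
    then have "i = 0" "j = n - 1" using interior[of i] interior[of j] unfolding n_def by fastforce+
    then show "f $ (?ys ! i) * (\<Prod>l\<in>{i..<j}. sgn_edge M (?ys ! l) (?ys ! Suc l)) * f $ (?ys ! j) > 0"
      using pos by (simp add: walk_sign_def n_def nth_append)
  qed
  then show ?thesis unfolding W_connects_def by force
qed

lemma W_connects_neg_edge:
  assumes "adj M x y" "M $ x $ y * f $ x * f $ y < 0"
  shows "W_connects M f x y"
proof -
  have "f $ x * walk_sign M [x, y] * f $ y = - (M $ x $ y * f $ x * f $ y) / \<bar>M $ x $ y\<bar>"
    by (simp add: walk_sign_def sgn_edge_def)
  also have "\<dots> > 0" using assms by (intro divide_pos_pos) (auto simp: adj_def)
  finally show ?thesis
    using W_connects_zero_interior_walk[of M x "[]" y] assms(1) by (simp add: is_walk_pair)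
qed

lemma W_connects_through_zero:
  assumes sym: "transpose M = M" and fz: "f $ z = 0"
    and pos: "(M $ z $ w * f $ w) * (M $ z $ y * f $ y) > 0"
  shows "W_connects M f w y"
proof -
  have nz: "M $ z $ w \<noteq> 0" "M $ z $ y \<noteq> 0" "z \<noteq> w" "z \<noteq> y" using pos fz by auto
  then have walk: "is_walk M [w, z, y]"
    using symmetric_entry[OF sym, of z w]
    by (auto simp: is_walk_def adj_def less_Suc_eq nth_Cons')
  have "f $ w * walk_sign M [w, z, y] * f $ y
      = (M $ z $ w * f $ w) * (M $ z $ y * f $ y) / (\<bar>M $ z $ w\<bar> * \<bar>M $ z $ y\<bar>)"
    using symmetric_entry[OF sym, of z w]
    by (simp add: walk_sign_def sgn_edge_def numeral_2_eq_2 atLeast0_lessThan_Suc field_simps)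
  also have "\<dots> > 0" using pos nz by (intro divide_pos_pos) auto
  finally show ?thesis
    using W_connects_zero_interior_walk[of M w "[z]" y f] walk fz by simp
qed

section \<open>Weak nodal domains\<close>

definition W_class :: "real^'n^'n \<Rightarrow> real^'n \<Rightarrow> 'n \<Rightarrow> 'n set" where
  "W_class M f x = {y. W_rel M f x y}"

definition nodal_domain_of :: "real^'n^'n \<Rightarrow> real^'n \<Rightarrow> 'n \<Rightarrow> 'n set" where
  "nodal_domain_of M f x = W_closure M f (W_class M f x)"

lemma W_class_eq:
  assumes "transpose M = M" "f $ x \<noteq> 0" "f $ y \<noteq> 0" "W_connects M f x y"
  shows "W_class M f x = W_class M f y"
  using assms W_connects_sym[OF assms(1)] W_connects_trans
  unfolding W_class_def W_rel_def nonzero_set_def by blast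

lemma nodal_domain_of_eq:
  "transpose M = M \<Longrightarrow> f $ x \<noteq> 0 \<Longrightarrow> f $ y \<noteq> 0 \<Longrightarrow> W_connects M f x y
    \<Longrightarrow> nodal_domain_of M f x = nodal_domain_of M f y"
  by (simp add: nodal_domain_of_def W_class_eq)

lemma nodal_domain_of_in_weak_nodal_domains: "f $ x \<noteq> 0 \<Longrightarrow> nodal_domain_of M f x \<in> weak_nodal_domains M f"
  unfolding nodal_domain_of_def weak_nodal_domains_def W_classes_def W_class_def nonzero_set_def
  by auto

lemma weak_nodal_domainsE:
  assumes "D \<in> weak_nodal_domains M f"
  obtains x where "f $ x \<noteq> 0" "D = nodal_domain_of M f x"
  using assms unfolding weak_nodal_domains_def W_classes_def nodal_domain_of_def W_class_def
    nonzero_set_def by auto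

lemma mem_weak_nodal_domain_iff:
  assumes sym: "transpose M = M" and fx: "f $ x \<noteq> 0" and D: "D \<in> weak_nodal_domains M f"
  shows "x \<in> D \<longleftrightarrow> D = nodal_domain_of M f x"
proof
  assume "D = nodal_domain_of M f x"
  then show "x \<in> D"
    using fx by (simp add: nodal_domain_of_def W_closure_def W_class_def W_rel_def nonzero_set_def)
next
  assume "x \<in> D"
  obtain y where fy: "f $ y \<noteq> 0" and Dy: "D = nodal_domain_of M f y"
    using D by (rule weak_nodal_domainsE)
  from \<open>x \<in> D\<close> obtain w where w: "w \<in> W_class M f y" "x = w \<or> W_connects M f x w"
    unfolding Dy nodal_domain_of_def W_closure_def by blast
  then have fw: "f $ w \<noteq> 0" and "y = w \<or> W_connects M f y w"
    by (simp_all add: W_class_def W_rel_def nonzero_set_def)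
  then have "W_class M f y = W_class M f w" using W_class_eq[OF sym fy fw] by auto
  also have "\<dots> = W_class M f x" using w(2) W_class_eq[OF sym fx fw] by auto
  finally show "D = nodal_domain_of M f x" by (simp add: Dy nodal_domain_of_def)
qed

lemma sum_restrict_fun_nth:
  assumes "transpose M = M"
  shows "(\<Sum>D\<in>weak_nodal_domains M f. a D *\<^sub>R restrict_fun f D) $ x = a (nodal_domain_of M f x) * f $ x"
proof (cases "f $ x = 0")
  case True
  then show ?thesis by (simp add: restrict_fun_def sum.neutral)
next
  case False
  have "(\<Sum>D\<in>weak_nodal_domains M f. a D *\<^sub>R restrict_fun f D) $ x
      = (\<Sum>D\<in>weak_nodal_domains M f. if D = nodal_domain_of M f x then a D * f $ x else 0)"
    unfolding sum_component using mem_weak_nodal_domain_iff[OF assms False]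
    by (intro sum.cong) (auto simp: restrict_fun_def)
  also have "\<dots> = a (nodal_domain_of M f x) * f $ x"
    using nodal_domain_of_in_weak_nodal_domains[OF False] by simp
  finally show ?thesis .
qed

section \<open>Eigenfunctions with a W-invariant ratio\<close>

lemma sum_eq_0_imp_ex_neg:
  assumes "finite A" "sum h A = (0::real)" "v \<in> A" "h v \<noteq> 0"
  shows "\<exists>w\<in>A. h w < 0"
  using assms sum_nonneg_eq_0_iff[of A h] by (meson not_le)

context
  fixes M :: "real^'n^'n" and f g :: "real^'n" and lam :: real and \<phi> :: "'n \<Rightarrow> real"
  assumes sym: "transpose M = M"
    and eigen_f: "M *v f = lam *\<^sub>R f" and eigen_g: "M *v g = lam *\<^sub>R g"
    and g_eq: "\<And>x. g $ x = \<phi> x * f $ x"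
    and \<phi>_W_connected: "\<And>x y. f $ x \<noteq> 0 \<Longrightarrow> f $ y \<noteq> 0 \<Longrightarrow> W_connects M f x y \<Longrightarrow> \<phi> x = \<phi> y"
begin

lemma row_sum_f: "(\<Sum>y\<in>UNIV. M $ x $ y * f $ y) = lam * f $ x"
  using arg_cong[OF eigen_f, of "\<lambda>v. v $ x"] by (simp add: matrix_vector_mult_def)

lemma row_sum_g: "(\<Sum>y\<in>UNIV. M $ x $ y * g $ y) = lam * g $ x"
  using arg_cong[OF eigen_g, of "\<lambda>v. v $ x"] by (simp add: matrix_vector_mult_def)

lemma quadratic_form_vanishes:
  "(\<Sum>x\<in>UNIV. \<Sum>y\<in>UNIV. M $ x $ y * f $ x * f $ y * (\<phi> y - \<phi> x)\<^sup>2) = 0"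
proof -
  define h where "h y = f $ y * (\<phi> y)\<^sup>2" for y
  have row: "(\<Sum>y\<in>UNIV. M $ x $ y * f $ x * f $ y * (\<phi> y - \<phi> x)\<^sup>2)
      = f $ x * (\<Sum>y\<in>UNIV. M $ x $ y * h y) - lam * (g $ x)\<^sup>2" for x
  proof -
    have "(\<Sum>y\<in>UNIV. M $ x $ y * f $ x * f $ y * (\<phi> y - \<phi> x)\<^sup>2)
        = (\<Sum>y\<in>UNIV. f $ x * (M $ x $ y * h y) - 2 * g $ x * (M $ x $ y * g $ y)
            + f $ x * (\<phi> x)\<^sup>2 * (M $ x $ y * f $ y))"
      by (intro sum.cong) (simp_all add: h_def g_eq power2_eq_square algebra_simps)
    also have "\<dots> = f $ x * (\<Sum>y\<in>UNIV. M $ x $ y * h y) - 2 * g $ x * (\<Sum>y\<in>UNIV. M $ x $ y * g $ y)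
        + f $ x * (\<phi> x)\<^sup>2 * (\<Sum>y\<in>UNIV. M $ x $ y * f $ y)"
      by (simp add: sum.distrib sum_subtractf sum_distrib_left)
    also have "\<dots> = f $ x * (\<Sum>y\<in>UNIV. M $ x $ y * h y) - 2 * g $ x * (lam * g $ x)
        + f $ x * (\<phi> x)\<^sup>2 * (lam * f $ x)"
      by (simp only: row_sum_f row_sum_g)
    finally show ?thesis by (simp add: g_eq power2_eq_square algebra_simps)
  qed
  have "(\<Sum>x\<in>UNIV. f $ x * (\<Sum>y\<in>UNIV. M $ x $ y * h y))
      = (\<Sum>x\<in>UNIV. \<Sum>y\<in>UNIV. M $ y $ x * f $ x * h y)"
    by (simp add: sum_distrib_left symmetric_entry[OF sym] mult_ac)
  also have "\<dots> = (\<Sum>y\<in>UNIV. \<Sum>x\<in>UNIV. M $ y $ x * f $ x * h y)"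
    by (rule sum.swap)
  also have "\<dots> = (\<Sum>y\<in>UNIV. (\<Sum>x\<in>UNIV. M $ y $ x * f $ x) * h y)"
    by (simp add: sum_distrib_right)
  also have "\<dots> = lam * (\<Sum>x\<in>UNIV. (g $ x)\<^sup>2)"
    unfolding row_sum_f by (simp add: h_def g_eq sum_distrib_left power2_eq_square mult_ac)
  finally show ?thesis by (simp add: row sum_subtractf sum_distrib_left)
qed

lemma edge_term_nonneg: "M $ x $ y * f $ x * f $ y * (\<phi> y - \<phi> x)\<^sup>2 \<ge> 0"
proof -
  have "\<phi> x = \<phi> y" if neg: "M $ x $ y * f $ x * f $ y < 0"
  proof (cases "x = y")
    case False
    with neg have "adj M x y" "f $ x \<noteq> 0" "f $ y \<noteq> 0" by (auto simp: adj_def)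
    then show ?thesis using \<phi>_W_connected W_connects_neg_edge neg by blast
  qed simp
  then show ?thesis by (cases "M $ x $ y * f $ x * f $ y < 0") auto
qed

lemma phi_eq_if_adj:
  assumes "adj M x y" "f $ x \<noteq> 0" "f $ y \<noteq> 0"
  shows "\<phi> x = \<phi> y"
proof -
  have "\<forall>x\<in>UNIV. (\<Sum>y\<in>UNIV. M $ x $ y * f $ x * f $ y * (\<phi> y - \<phi> x)\<^sup>2) = 0"
    using quadratic_form_vanishes
    by (subst (asm) sum_nonneg_eq_0_iff) (auto intro: sum_nonneg edge_term_nonneg)
  then have "\<forall>y\<in>UNIV. M $ x $ y * f $ x * f $ y * (\<phi> y - \<phi> x)\<^sup>2 = 0"
    by (subst (asm) sum_nonneg_eq_0_iff) (auto intro: edge_term_nonneg)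
  then have "M $ x $ y * f $ x * f $ y * (\<phi> y - \<phi> x)\<^sup>2 = 0" by simp
  then show ?thesis using assms by (simp add: adj_def)
qed

lemma phi_eq_across_zero_vertex:
  assumes fz: "f $ z = 0" and w: "M $ z $ w * f $ w \<noteq> 0" and y: "M $ z $ y * f $ y \<noteq> 0"
  shows "\<phi> w = \<phi> y"
proof -
  define t where "t v = M $ z $ v * f $ v" for v
  have same_sign: "\<phi> v = \<phi> v'" if "t v * t v' > 0" for v v'
    using that W_connects_through_zero[OF sym fz] \<phi>_W_connected unfolding t_def
    by (metis mult_eq_0_iff less_irrefl)
  consider "t w * t y > 0" | "t w * t y < 0" using w y unfolding t_def by (metis linorder_neqE mult_eq_0_iff)
  then show ?thesis
  proof cases
    case 1
    then show ?thesis by (rule same_sign)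
  next
    case opposite: 2
    define S where "S = {v. t v * t w < 0}"
    have "(\<Sum>v\<in>UNIV. t v * t w * (\<phi> v - \<phi> w))
        = t w * ((\<Sum>v\<in>UNIV. M $ z $ v * g $ v) - \<phi> w * (\<Sum>v\<in>UNIV. M $ z $ v * f $ v))"
      by (simp add: t_def g_eq sum_distrib_left sum_subtractf algebra_simps)
    also have "\<dots> = 0" unfolding row_sum_f row_sum_g by (simp add: g_eq fz)
    finally have "(\<Sum>v\<in>UNIV. t v * t w * (\<phi> v - \<phi> w)) = 0" .
    moreover have "t v * t w * (\<phi> v - \<phi> w) = (if v \<in> S then t v * t w * (\<phi> y - \<phi> w) else 0)" for v
    proof -
      have "\<phi> v = \<phi> y" if "t v * t w < 0"
        using that opposite same_sign by (auto simp: mult_less_0_iff zero_less_mult_iff)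
      moreover have "\<phi> v = \<phi> w" if "t v * t w > 0" using that same_sign by blast
      ultimately show ?thesis unfolding S_def by (cases "t v * t w" "0::real" rule: linorder_cases) auto
    qed
    ultimately have "(\<Sum>v\<in>S. t v * t w) * (\<phi> y - \<phi> w) = 0"
      by (simp add: sum.If_cases sum_distrib_right)
    moreover have "0 < (\<Sum>v\<in>S. - (t v * t w))"
      using opposite by (intro sum_pos2[of S y]) (auto simp: S_def mult.commute)
    then have "(\<Sum>v\<in>S. t v * t w) \<noteq> 0" by (simp add: sum_negf)
    ultimately show ?thesis by simp
  qed
qed

lemma phi_eq_along_zero_interior_walk:
  assumes walk: "is_walk M (u # zs @ [v])" and zeros: "\<forall>w\<in>set zs. f $ w = 0"
    and fu: "f $ u \<noteq> 0" and fv: "f $ v \<noteq> 0"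
  shows "\<phi> u = \<phi> v"
proof (cases "zs = []")
  case True
  then show ?thesis using walk phi_eq_if_adj fu fv by (simp add: is_walk_pair)
next
  case False
  define xs z where "xs = u # zs" and "z = last zs"
  have fz: "f $ z = 0" using zeros False by (simp add: z_def)
  have last_xs: "last xs = z" using False by (simp add: xs_def z_def)
  have xs_walk: "is_walk M xs"
    using is_walk_take[OF walk, of "length xs"] False by (simp add: xs_def Suc_le_eq)
  have "drop (length zs) (u # zs @ [v]) = [z, v]"
    using False by (cases zs rule: rev_exhaust) (simp_all add: z_def)
  then have "adj M z v"
    using is_walk_drop[OF walk, of "length zs"] by (simp add: is_walk_pair)
  define t where "t w = M $ z $ w * f $ w" for w
  define K where "K = f $ u * walk_sign M xs"
  have "K \<noteq> 0" using fu walk_sign_nonzero[OF xs_walk] by (simp add: K_def)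
  have "t v \<noteq> 0" using \<open>adj M z v\<close> fv by (simp add: t_def adj_def)
  moreover have "(\<Sum>w\<in>UNIV. K * t w) = 0"
    using row_sum_f[of z] fz by (simp add: t_def sum_distrib_left[symmetric])
  \<comment> \<open>the walk u, zs, w is a W-walk iff K * t w < 0, and the zero row sum at z provides such w\<close>
  ultimately obtain w where w: "K * t w < 0"
    using sum_eq_0_imp_ex_neg[of UNIV "\<lambda>w. K * t w" v] \<open>K \<noteq> 0\<close> by auto
  then have tw: "t w \<noteq> 0" by auto
  then have "adj M z w" and fw: "f $ w \<noteq> 0" using fz by (auto simp: t_def adj_def)
  then have "is_walk M (xs @ [w])"
    using is_walk_join[OF xs_walk, of "[z, w]"] last_xs by (simp add: is_walk_pair)
  have "f $ u * walk_sign M (xs @ [w]) * f $ w = - (K * t w) / \<bar>M $ z $ w\<bar>"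
    using walk_sign_snoc[of xs M w] last_xs by (simp add: K_def t_def sgn_edge_def xs_def)
  also have "\<dots> > 0" using w tw by (intro divide_pos_pos) (auto simp: t_def)
  finally have "W_connects M f u w"
    using W_connects_zero_interior_walk \<open>is_walk M (xs @ [w])\<close> zeros by (simp add: xs_def)
  then have "\<phi> u = \<phi> w" using \<phi>_W_connected fu fw by blast
  also have "\<phi> w = \<phi> v"
    using tw \<open>t v \<noteq> 0\<close> unfolding t_def by (rule phi_eq_across_zero_vertex[OF fz])
  finally show ?thesis .
qed

lemma phi_eq_along_walk:
  "is_walk M ys \<Longrightarrow> f $ hd ys \<noteq> 0 \<Longrightarrow> f $ last ys \<noteq> 0 \<Longrightarrow> \<phi> (hd ys) = \<phi> (last ys)"
proof (induction "length ys" arbitrary: ys rule: less_induct)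
  case less
  then have len: "2 \<le> length ys" by (simp add: is_walk_length)
  show ?case
  proof (cases "\<exists>k. 0 < k \<and> k < length ys - 1 \<and> f $ (ys ! k) \<noteq> 0")
    case True
    then obtain k where k: "0 < k" "k < length ys - 1" "f $ (ys ! k) \<noteq> 0" by blast
    have "last (take (Suc k) ys) = ys ! k" using k by (simp add: take_Suc_conv_app_nth)
    then have "\<phi> (hd ys) = \<phi> (ys ! k)"
      using less.hyps[of "take (Suc k) ys"] is_walk_take[OF less.prems(1), of "Suc k"] less.prems k
      by simp
    also have "\<phi> (ys ! k) = \<phi> (last ys)"
      using less.hyps[of "drop k ys"] is_walk_drop[OF less.prems(1), of k] less.prems k
      by (simp add: hd_drop_conv_nth)
    finally show ?thesis .
  next
    case False
    obtain u rest where "ys = u # rest" "rest \<noteq> []" using len by (cases ys) fastforce+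
    then obtain zs v where ys: "ys = u # zs @ [v]" by (metis rev_exhaust)
    have "f $ w = 0" if w: "w \<in> set zs" for w
    proof -
      obtain i where "i < length zs" "zs ! i = w" using w by (auto simp: in_set_conv_nth)
      then show ?thesis using False ys by (auto simp: nth_append dest!: spec[of _ "Suc i"])
    qed
    then show ?thesis using phi_eq_along_zero_interior_walk less.prems ys by simp
  qed
qed

lemma phi_const_on_support:
  assumes "connected_sg M" "f $ x \<noteq> 0" "f $ y \<noteq> 0"
  shows "\<phi> x = \<phi> y"
proof (cases "x = y")
  case False
  then obtain ys where "is_walk M ys" "hd ys = x" "last ys = y"
    using assms(1) unfolding connected_sg_def by blast
  then show ?thesis using phi_eq_along_walk assms by blast
qed simp

end

theorem lemma4p4:
  fixes M :: "real^'n^'n" and f :: "real^'n" and lam :: real and a :: "'n set \<Rightarrow> real"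
  assumes "transpose M = M"
    and "connected_sg M"
    and "is_eigenfunction M lam f"
    and "is_eigenfunction M lam (\<Sum>D\<in>weak_nodal_domains M f. a D *\<^sub>R restrict_fun f D)"
  shows "\<forall>D1\<in>weak_nodal_domains M f. \<forall>D2\<in>weak_nodal_domains M f. a D1 = a D2"
proof -
  define g where "g = (\<Sum>D\<in>weak_nodal_domains M f. a D *\<^sub>R restrict_fun f D)"
  define \<phi> where "\<phi> x = a (nodal_domain_of M f x)" for x
  have "\<phi> x = \<phi> y" if "f $ x \<noteq> 0" "f $ y \<noteq> 0" for x y
  proof (rule phi_const_on_support[where g = g])
    show "M *v f = lam *\<^sub>R f" "M *v g = lam *\<^sub>R g"
      using assms(3,4) by (simp_all add: is_eigenfunction_def g_def)
    show "g $ z = \<phi> z * f $ z" for z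
      using sum_restrict_fun_nth[OF assms(1)] by (simp add: g_def \<phi>_def)
    show "\<phi> u = \<phi> v" if "f $ u \<noteq> 0" "f $ v \<noteq> 0" "W_connects M f u v" for u v
      using nodal_domain_of_eq[OF assms(1) that] by (simp add: \<phi>_def)
  qed (use assms(1,2) that in auto)
  then show ?thesis by (metis weak_nodal_domainsE \<phi>_def)
qed

end
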